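(* Let $n\geq 1$ and consider $2n$ qubits labeled $(-,i)$ and $(+,j)$ for $i,j\in\{1,\dots,n\}$, with Hilbert space $\mathcal{H}=(\mathbb{C}^2)^{\otimes 2n}$. For $i,j\in\{1,\dots,n\}$ let $|\psi_1\rangle^{ij}=\tfrac{1}{\sqrt2}(|00\rangle+|11\rangle)$, $|\psi_2\rangle^{ij}=\tfrac{1}{\sqrt2}(|01\rangle+|10\rangle)$, $|\psi_3\rangle^{ij}=\tfrac{1}{\sqrt2}(|00\rangle-|11\rangle)$, $|\psi_4\rangle^{ij}=\tfrac{1}{\sqrt2}(|01\rangle-|10\rangle)$, where the two tensor factors are the qubits $(-,i)$ and $(+,j)$, and let $E^{ij}_a=|\psi_a\rangle\langle\psi_a|^{ij}$ (acting as the identity on all other qubits), $a=1,\dots,4$. Then the algebra $\mathcal{D}$ generated by $\{E^{ij}_a : i,j=1,\dots,n;\ a=1,\dots,4\}$ contains no non-trivial local operator, i.e.\ no operator acting non-trivially on only a single qubit $(-,i)$ or $(+,j)$ (an operator of the form $A$ on that qubit tensored with the identity elsewhere, with $A$ not a multiple of the identity). *)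

theory Defs
  imports Complex_Main
begin

text \<open>Qubits are pairs (side, index): (False, i) is the qubit (-,i), (True, j) is (+,j),
  with indices in {1..n}. A computational basis state is a function from qubits to bool
  that is False outside the qubit set. Operators on the Hilbert space are given by their
  matrix (kernel) with respect to the computational basis, and vanish outside
  basis states.\<close>

type_synonym qubit = "bool \<times> nat"
type_synonym state = "qubit \<Rightarrow> bool"
type_synonym op = "state \<Rightarrow> state \<Rightarrow> complex"

definition qubits :: "nat \<Rightarrow> qubit set" where
  "qubits n = UNIV \<times> {1..n}"

definition basis :: "nat \<Rightarrow> state set" where
  "basis n = {s. \<forall>q. q \<notin> qubits n \<longrightarrow> s q = False}"

definition op_id :: "nat \<Rightarrow> op" where
  "op_id n = (\<lambda>s t. if s \<in> basis n \<and> s = t then 1 else 0)"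

definition op_mult :: "nat \<Rightarrow> op \<Rightarrow> op \<Rightarrow> op" where
  "op_mult n K L = (\<lambda>s t. \<Sum>u\<in>basis n. K s u * L u t)"

definition op_add :: "op \<Rightarrow> op \<Rightarrow> op" where
  "op_add K L = (\<lambda>s t. K s t + L s t)"

definition op_scale :: "complex \<Rightarrow> op \<Rightarrow> op" where
  "op_scale c K = (\<lambda>s t. c * K s t)"

inductive_set gen_algebra :: "nat \<Rightarrow> op set \<Rightarrow> op set" for n G where
  gen: "K \<in> G \<Longrightarrow> K \<in> gen_algebra n G"
| unit: "op_id n \<in> gen_algebra n G"
| add: "K \<in> gen_algebra n G \<Longrightarrow> L \<in> gen_algebra n G \<Longrightarrow> op_add K L \<in> gen_algebra n G"
| scale: "K \<in> gen_algebra n G \<Longrightarrow> op_scale c K \<in> gen_algebra n G"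
| mult: "K \<in> gen_algebra n G \<Longrightarrow> L \<in> gen_algebra n G \<Longrightarrow> op_mult n K L \<in> gen_algebra n G"

text \<open>The four Bell-type vectors psi_a, as amplitudes psi_a(x,y) of |xy>,
  x on the first factor (-,i), y on the second factor (+,j).\<close>
definition psi :: "nat \<Rightarrow> bool \<Rightarrow> bool \<Rightarrow> complex" where
  "psi a x y =
     (if a = 1 then (if x = y then 1 / sqrt 2 else 0)
      else if a = 2 then (if x \<noteq> y then 1 / sqrt 2 else 0)
      else if a = 3 then (if x = y then (if x then - 1 / sqrt 2 else 1 / sqrt 2) else 0)
      else (if x \<noteq> y then (if x then - 1 / sqrt 2 else 1 / sqrt 2) else 0))"

definition E :: "nat \<Rightarrow> nat \<Rightarrow> nat \<Rightarrow> nat \<Rightarrow> op" where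
  "E n i j a = (\<lambda>s t.
     if s \<in> basis n \<and> t \<in> basis n \<and>
        (\<forall>r. r \<noteq> (False, i) \<and> r \<noteq> (True, j) \<longrightarrow> s r = t r)
     then psi a (s (False, i)) (s (True, j)) * cnj (psi a (t (False, i)) (t (True, j)))
     else 0)"

definition gens :: "nat \<Rightarrow> op set" where
  "gens n = {E n i j a | i j a. i \<in> {1..n} \<and> j \<in> {1..n} \<and> a \<in> {1..4}}"

definition local_op :: "nat \<Rightarrow> qubit \<Rightarrow> (bool \<Rightarrow> bool \<Rightarrow> complex) \<Rightarrow> op" where
  "local_op n q A = (\<lambda>s t.
     if s \<in> basis n \<and> t \<in> basis n \<and> (\<forall>r. r \<noteq> q \<longrightarrow> s r = t r)
     then A (s q) (t q) else 0)"

definition scalar_2x2 :: "(bool \<Rightarrow> bool \<Rightarrow> complex) \<Rightarrow> bool" where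
  "scalar_2x2 A \<longleftrightarrow> (\<exists>c. \<forall>x y. A x y = (if x = y then c else 0))"

end

theory Submission
  imports Defs
begin

text \<open>Every generator commutes with the global parity \<open>Z \<otimes> \<dots> \<otimes> Z\<close> and the global flip
  \<open>X \<otimes> \<dots> \<otimes> X\<close>: \<open>E\<^sup>i\<^sup>j\<^sub>a\<close> only changes the two qubits \<open>(-,i)\<close>, \<open>(+,j)\<close> and preserves
  their XOR, and flipping both qubits changes each Bell vector at most by a sign, which
  cancels in the projector. Both symmetries pass to the generated algebra. A local operator
  \<open>A \<otimes> 1\<close> commuting with the parity must be diagonal, and commuting with the flip forces
  its two diagonal entries to agree, so \<open>A\<close> is scalar.\<close>

definition flip :: "nat \<Rightarrow> state \<Rightarrow> state" where
  "flip n s = (\<lambda>q. if q \<in> qubits n then \<not> s q else s q)"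

text \<open>The eigenvalue of \<open>Z \<otimes> \<dots> \<otimes> Z\<close> on the basis state \<open>s\<close>.\<close>
definition parity_sign :: "nat \<Rightarrow> state \<Rightarrow> int" where
  "parity_sign n s = (\<Prod>q\<in>qubits n. if s q then -1 else 1)"

definition parity_preserving :: "nat \<Rightarrow> op \<Rightarrow> bool" where
  "parity_preserving n K \<longleftrightarrow> (\<forall>s t. K s t \<noteq> 0 \<longrightarrow> parity_sign n s = parity_sign n t)"

definition flip_invariant :: "nat \<Rightarrow> op \<Rightarrow> bool" where
  "flip_invariant n K \<longleftrightarrow> (\<forall>s t. K (flip n s) (flip n t) = K s t)"

lemma finite_qubits: "finite (qubits n)"
  by (simp add: qubits_def)

lemma flip_flip [simp]: "flip n (flip n s) = s"
  by (auto simp: flip_def)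

lemma flip_in_basis_iff [simp]: "flip n s \<in> basis n \<longleftrightarrow> s \<in> basis n"
  by (auto simp: flip_def basis_def)

lemma flip_apply [simp]: "q \<in> qubits n \<Longrightarrow> flip n s q = (\<not> s q)"
  by (simp add: flip_def)

lemma flip_eq_iff [simp]: "flip n s = flip n t \<longleftrightarrow> s = t"
  by (metis flip_flip)

lemma flip_agree_iff:
  "(\<forall>r. P r \<longrightarrow> flip n s r = flip n t r) \<longleftrightarrow> (\<forall>r. P r \<longrightarrow> s r = t r)"
  by (auto simp: flip_def)

lemma parity_sign_update_pair:
  assumes "a \<in> qubits n" "b \<in> qubits n" "a \<noteq> b"
    and agree: "\<forall>r. r \<noteq> a \<and> r \<noteq> b \<longrightarrow> s r = t r"
    and xor: "(s a = s b) = (t a = t b)"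
  shows "parity_sign n s = parity_sign n t"
proof -
  let ?g = "\<lambda>s q. if s q then -1 else (1::int)"
  have split: "parity_sign n s = ?g s a * ?g s b * prod (?g s) (qubits n - {a} - {b})" for s
    using assms(1-3) finite_qubits
    by (simp add: parity_sign_def prod.remove[of "qubits n" a] prod.remove[of "qubits n - {a}" b])
  have "prod (?g s) (qubits n - {a} - {b}) = prod (?g t) (qubits n - {a} - {b})"
    using agree by (intro prod.cong) auto
  with xor show ?thesis
    by (simp only: split) (cases "s a"; cases "s b"; cases "t a"; cases "t b"; simp)
qed

lemma parity_sign_single:
  assumes "q \<in> qubits n"
  shows "parity_sign n ((\<lambda>_. False)(q := x)) = (if x then -1 else 1)"
  using assms finite_qubits by (simp add: parity_sign_def prod.remove[of _ q])

lemma parity_preserving_gen_algebra: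
  assumes "\<forall>K\<in>G. parity_preserving n K" "K \<in> gen_algebra n G"
  shows "parity_preserving n K"
  using assms(2)
proof (induction rule: gen_algebra.induct)
  case (gen K)
  with assms(1) show ?case by blast
next
  case unit
  show ?case by (simp add: parity_preserving_def op_id_def)
next
  case (add K L)
  show ?case unfolding parity_preserving_def
  proof (intro allI impI)
    fix s t
    assume "op_add K L s t \<noteq> 0"
    then have "K s t \<noteq> 0 \<or> L s t \<noteq> 0"
      by (auto simp: op_add_def)
    with add.IH show "parity_sign n s = parity_sign n t"
      unfolding parity_preserving_def by blast
  qed
next
  case (scale K c)
  then show ?case by (simp add: parity_preserving_def op_scale_def)
next
  case (mult K L)
  show ?case unfolding parity_preserving_def
  proof (intro allI impI)
    fix s t
    assume "op_mult n K L s t \<noteq> 0"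
    then obtain u where "K s u * L u t \<noteq> 0"
      unfolding op_mult_def by (meson sum.neutral)
    then have "K s u \<noteq> 0" "L u t \<noteq> 0"
      by auto
    with mult.IH show "parity_sign n s = parity_sign n t"
      unfolding parity_preserving_def by metis
  qed
qed

lemma flip_invariant_gen_algebra:
  assumes "\<forall>K\<in>G. flip_invariant n K" "K \<in> gen_algebra n G"
  shows "flip_invariant n K"
  using assms(2)
proof (induction rule: gen_algebra.induct)
  case (gen K)
  with assms(1) show ?case by blast
next
  case unit
  show ?case by (auto simp: flip_invariant_def op_id_def)
next
  case (add K L)
  then show ?case by (simp add: flip_invariant_def op_add_def)
next
  case (scale K c)
  then show ?case by (simp add: flip_invariant_def op_scale_def)
next
  case (mult K L)
  show ?case unfolding flip_invariant_def
  proof (intro allI)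
    fix s t
    have "op_mult n K L (flip n s) (flip n t)
        = (\<Sum>u\<in>basis n. K (flip n s) (flip n u) * L (flip n u) (flip n t))"
      unfolding op_mult_def by (rule sum.reindex_bij_witness[of _ "flip n" "flip n"]) simp_all
    also have "\<dots> = op_mult n K L s t"
      using mult.IH by (simp add: flip_invariant_def op_mult_def)
    finally show "op_mult n K L (flip n s) (flip n t) = op_mult n K L s t" .
  qed
qed

lemma psi_nonzero_same_iff: "psi a x y \<noteq> 0 \<Longrightarrow> (x = y) = (a = 1 \<or> a = 3)"
  by (auto simp: psi_def split: if_splits)

lemma psi_projector_flip:
  "psi a (\<not> x) (\<not> y) * cnj (psi a (\<not> x') (\<not> y')) = psi a x y * cnj (psi a x' y')"
  by (cases x; cases y; cases x'; cases y') (auto simp: psi_def)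

lemma parity_preserving_E:
  assumes "i \<in> {1..n}" "j \<in> {1..n}"
  shows "parity_preserving n (E n i j a)"
  unfolding parity_preserving_def
proof (intro allI impI)
  fix s t
  assume "E n i j a s t \<noteq> 0"
  then have agree: "\<forall>r. r \<noteq> (False, i) \<and> r \<noteq> (True, j) \<longrightarrow> s r = t r"
    and "psi a (s (False, i)) (s (True, j)) \<noteq> 0" "psi a (t (False, i)) (t (True, j)) \<noteq> 0"
    by (auto simp: E_def split: if_splits)
  then have "(s (False, i) = s (True, j)) = (t (False, i) = t (True, j))"
    by (auto dest: psi_nonzero_same_iff)
  with agree assms show "parity_sign n s = parity_sign n t"
    by (intro parity_sign_update_pair[of "(False, i)" n "(True, j)"]) (auto simp: qubits_def)
qed

lemma flip_invariant_E:
  assumes "i \<in> {1..n}" "j \<in> {1..n}"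
  shows "flip_invariant n (E n i j a)"
proof -
  have "(False, i) \<in> qubits n" "(True, j) \<in> qubits n"
    using assms by (auto simp: qubits_def)
  then show ?thesis
    by (simp only: flip_invariant_def E_def flip_agree_iff flip_in_basis_iff flip_apply
        psi_projector_flip simp_thms)
qed

lemma local_op_parity_preserving_diagonal:
  assumes "q \<in> qubits n" "parity_preserving n (local_op n q A)" "x \<noteq> y"
  shows "A x y = 0"
proof (rule ccontr)
  let ?s = "\<lambda>x. (\<lambda>_. False)(q := x)"
  have "?s x \<in> basis n" "?s y \<in> basis n"
    using assms(1) by (auto simp: basis_def)
  moreover assume "A x y \<noteq> 0"
  ultimately have "local_op n q A (?s x) (?s y) \<noteq> 0"
    by (simp add: local_op_def)
  with assms have "parity_sign n (?s x) = parity_sign n (?s y)"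
    unfolding parity_preserving_def by blast
  with assms show False
    by (simp add: parity_sign_single split: if_splits)
qed

lemma local_op_flip_invariant_symmetric:
  assumes "q \<in> qubits n" "flip_invariant n (local_op n q A)"
  shows "A (\<not> x) (\<not> y) = A x y"
proof -
  let ?s = "\<lambda>x. (\<lambda>_. False)(q := x)"
  have "?s x \<in> basis n" "?s y \<in> basis n"
    using assms(1) by (auto simp: basis_def)
  moreover have "\<forall>r. r \<noteq> q \<longrightarrow> flip n (?s x) r = flip n (?s y) r"
    unfolding flip_agree_iff by simp
  moreover have "local_op n q A (flip n (?s x)) (flip n (?s y)) = local_op n q A (?s x) (?s y)"
    using assms(2) by (simp add: flip_invariant_def)
  ultimately show ?thesis
    using assms(1) by (simp add: local_op_def)
qed

lemma scalar_2x2I: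
  assumes "\<And>x y. x \<noteq> y \<Longrightarrow> A x y = 0" "A True True = A False False"
  shows "scalar_2x2 A"
  unfolding scalar_2x2_def
proof (intro exI allI)
  fix x y
  show "A x y = (if x = y then A False False else 0)"
    using assms(1)[of True False] assms(1)[of False True] assms(2) by (cases x; cases y) auto
qed

theorem lemma4:
  fixes n :: nat
  assumes "n \<ge> 1"
  shows "\<forall>q \<in> qubits n. \<forall>A. \<not> scalar_2x2 A \<longrightarrow> local_op n q A \<notin> gen_algebra n (gens n)"
proof (intro ballI allI impI notI)
  fix q A
  assume q: "q \<in> qubits n" and not_scalar: "\<not> scalar_2x2 A"
    and in_algebra: "local_op n q A \<in> gen_algebra n (gens n)"
  have "\<forall>K\<in>gens n. parity_preserving n K"
    by (auto simp: gens_def intro: parity_preserving_E)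
  then have "parity_preserving n (local_op n q A)"
    using in_algebra by (rule parity_preserving_gen_algebra)
  then have diagonal: "A x y = 0" if "x \<noteq> y" for x y
    using local_op_parity_preserving_diagonal[OF q _ that] by blast
  have "\<forall>K\<in>gens n. flip_invariant n K"
    by (auto simp: gens_def intro: flip_invariant_E)
  then have "flip_invariant n (local_op n q A)"
    using in_algebra by (rule flip_invariant_gen_algebra)
  then have "A True True = A False False"
    using local_op_flip_invariant_symmetric[OF q, of A False False] by simp
  with diagonal not_scalar show False
    using scalar_2x2I by blast
qed

end
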